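(* For every polynomial orbit-finite set $\Sigma$, the delay function $(\Sigma+\{\bot\})^*\supseteq\Sigma^*\ni a_1a_2\cdots a_k\mapsto \bot\,a_1\cdots a_{k-1}\in(\Sigma+\{\bot\})^*$ (for $k\ge1$; the empty word maps to itself) is a composition of primes.
   Context: Atoms $\mathbb A$ are a countably infinite set; polynomial orbit-finite sets are built from $\mathbb A$ and singletons by finite products and disjoint unions; equivariant means commuting with all bijections of $\mathbb A$. Compositions of primes: the smallest class containing (i) length-preserving homomorphisms lifting letterwise an equivariant function between polynomial orbit-finite sets, (ii) classical Mealy machine functions (finite alphabets and states, transition $Q\times\Sigma\to Q\times\Gamma$), (iii) atom propagation $(\mathbb A+\{\epsilon,\downarrow\})^*\to(\mathbb A+\bot)^*$ (position $i$ outputs the atom of position $j$ if $i$ is labelled $\downarrow$, $j<i$ carries an atom, and all positions strictly between are labelled $\epsilon$; otherwise $\bot$), closed under sequential composition and parallel composition $f_1|f_2:(\Sigma_1\times\Sigma_2)^*\to(\Gamma_1\times\Gamma_2)^*$ applying $f_i$ to the $i$-th projection. *)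

theory Defs
  imports Main
begin

type_synonym atom = nat

datatype pof = PAtoms | PUnit | PProd pof pof | PSum pof pof

text \<open>Universe of values; the elements of a polynomial orbit-finite set are carved out
  by the predicate in_pof.\<close>
datatype val = VAtom atom | VUnit | VPair val val | VInl val | VInr val

fun in_pof :: "pof \<Rightarrow> val \<Rightarrow> bool" where
  "in_pof PAtoms (VAtom a) = True"
| "in_pof PUnit VUnit = True"
| "in_pof (PProd s t) (VPair x y) = (in_pof s x \<and> in_pof t y)"
| "in_pof (PSum s t) (VInl x) = in_pof s x"
| "in_pof (PSum s t) (VInr y) = in_pof t y"
| "in_pof _ _ = False"

definition elems :: "pof \<Rightarrow> val set" where
  "elems s = {x. in_pof s x}"

fun rename :: "(atom \<Rightarrow> atom) \<Rightarrow> val \<Rightarrow> val" where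
  "rename \<pi> (VAtom a) = VAtom (\<pi> a)"
| "rename \<pi> VUnit = VUnit"
| "rename \<pi> (VPair x y) = VPair (rename \<pi> x) (rename \<pi> y)"
| "rename \<pi> (VInl x) = VInl (rename \<pi> x)"
| "rename \<pi> (VInr x) = VInr (rename \<pi> x)"

definition equivariant_fun :: "pof \<Rightarrow> pof \<Rightarrow> (val \<Rightarrow> val) \<Rightarrow> bool" where
  "equivariant_fun s t f \<longleftrightarrow>
     (\<forall>x \<in> elems s. f x \<in> elems t) \<and>
     (\<forall>\<pi>. bij \<pi> \<longrightarrow> (\<forall>x \<in> elems s. f (rename \<pi> x) = rename \<pi> (f x)))"

text \<open>Finite polynomial orbit-finite sets: those not using the atoms.\<close>
fun atom_free :: "pof \<Rightarrow> bool" where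
  "atom_free PAtoms = False"
| "atom_free PUnit = True"
| "atom_free (PProd s t) = (atom_free s \<and> atom_free t)"
| "atom_free (PSum s t) = (atom_free s \<and> atom_free t)"

fun mealy_run :: "(nat \<Rightarrow> val \<Rightarrow> nat \<times> val) \<Rightarrow> nat \<Rightarrow> val list \<Rightarrow> val list" where
  "mealy_run \<delta> q [] = []"
| "mealy_run \<delta> q (a # w) = snd (\<delta> q a) # mealy_run \<delta> (fst (\<delta> q a)) w"

text \<open>Atom propagation, input alphabet A + {eps, down} encoded as
  VInl (VAtom a), VInr (VInl VUnit) = eps, VInr (VInr VUnit) = down;
  output alphabet A + {bot} with bot = VInr VUnit.\<close>
definition eps_letter :: val where "eps_letter = VInr (VInl VUnit)"
definition down_letter :: val where "down_letter = VInr (VInr VUnit)"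
definition bot_letter :: val where "bot_letter = VInr VUnit"

definition prop_in :: pof where "prop_in = PSum PAtoms (PSum PUnit PUnit)"
definition prop_out :: pof where "prop_out = PSum PAtoms PUnit"

definition atom_prop :: "val list \<Rightarrow> val list" where
  "atom_prop w = map (\<lambda>i.
     if w ! i = down_letter \<and>
        (\<exists>j<i. \<exists>a. w ! j = VInl (VAtom a) \<and> (\<forall>k. j < k \<and> k < i \<longrightarrow> w ! k = eps_letter))
     then VInl (VAtom (SOME a. \<exists>j<i. w ! j = VInl (VAtom a) \<and>
                              (\<forall>k. j < k \<and> k < i \<longrightarrow> w ! k = eps_letter)))
     else bot_letter) [0..<length w]"

fun vfst :: "val \<Rightarrow> val" where
  "vfst (VPair x y) = x"
| "vfst _ = VUnit"

fun vsnd :: "val \<Rightarrow> val" where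
  "vsnd (VPair x y) = y"
| "vsnd _ = VUnit"

definition par_comp :: "(val list \<Rightarrow> val list) \<Rightarrow> (val list \<Rightarrow> val list) \<Rightarrow> val list \<Rightarrow> val list" where
  "par_comp f1 f2 w = map2 VPair (f1 (map vfst w)) (f2 (map vsnd w))"

text \<open>comp_primes s t f: f is a composition of primes with input alphabet s and output
  alphabet t (f is only meaningful on words over elems s).\<close>
inductive comp_primes :: "pof \<Rightarrow> pof \<Rightarrow> (val list \<Rightarrow> val list) \<Rightarrow> bool" where
  letterwise: "equivariant_fun s t g \<Longrightarrow> comp_primes s t (map g)"
| mealy: "\<lbrakk> atom_free s; atom_free t; finite Q; q0 \<in> Q;
            \<forall>q\<in>Q. \<forall>a\<in>elems s. fst (\<delta> q a) \<in> Q \<and> snd (\<delta> q a) \<in> elems t \<rbrakk>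
          \<Longrightarrow> comp_primes s t (mealy_run \<delta> q0)"
| atomprop: "comp_primes prop_in prop_out atom_prop"
| seq: "\<lbrakk> comp_primes s t f; comp_primes t u g \<rbrakk> \<Longrightarrow> comp_primes s u (g \<circ> f)"
| par: "\<lbrakk> comp_primes s1 t1 f1; comp_primes s2 t2 f2 \<rbrakk>
          \<Longrightarrow> comp_primes (PProd s1 s2) (PProd t1 t2) (par_comp f1 f2)"

text \<open>Delay function Sigma* -> (Sigma + {bot})*; letters a of Sigma become VInl a,
  bot is VInr VUnit.\<close>
fun delay :: "val list \<Rightarrow> val list" where
  "delay [] = []"
| "delay w = bot_letter # map VInl (butlast w)"

end

theory Submission
  imports Defs
begin

text \<open>The delay function is, up to the letterwise embedding of \<open>\<Sigma>\<close> into \<open>\<Sigma> + {\<bottom>}\<close>, the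
  length-preserving right shift on words over \<open>\<Sigma> + {\<bottom>}\<close>, and this shift is realised by
  induction on \<open>\<Sigma>\<close>. For a product or a disjoint union, a word is split letterwise into two
  words, both are shifted in parallel and the results are recombined letterwise. For the
  singleton a two-state Mealy machine remembers the previous letter. For the atoms, a Mealy
  machine tags positions with their parity, and each position is written into the track of
  its parity, with \<open>\<down>\<close> everywhere else; atom propagation on a track then copies to every
  position of the other parity the atom one position to its left.\<close>

abbreviation with_bot :: "pof \<Rightarrow> pof" where
  "with_bot s \<equiv> PSum s PUnit"

fun shift :: "val list \<Rightarrow> val list" where
  "shift [] = []"
| "shift (x # xs) = bot_letter # butlast (x # xs)"

lemma length_shift [simp]: "length (shift w) = length w"
  by (cases w) auto

lemma shift_eq_take: "shift w = take (length w) (bot_letter # w)"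
  by (cases w) (simp_all add: butlast_conv_take)

lemma nth_shift: "i < length w \<Longrightarrow> shift w ! i = (if i = 0 then bot_letter else w ! (i - 1))"
  by (simp add: shift_eq_take nth_Cons')

lemma delay_eq_shift: "delay w = shift (map VInl w)"
  by (cases w) (simp_all add: map_butlast)

lemma map_shift_pairs:
  assumes "length u = length v" and "h (VPair bot_letter bot_letter) = bot_letter"
  shows "map h (map2 VPair (shift u) (shift v)) = shift (map h (map2 VPair u v))"
  using assms by (intro nth_equalityI) (auto simp: nth_shift)

lemma elems_with_bot: "x \<in> elems (with_bot s) \<longleftrightarrow> (\<exists>a. x = VInl a \<and> a \<in> elems s) \<or> x = bot_letter"
  by (cases x) (auto simp: elems_def bot_letter_def elim: in_pof.elims)

lemma elems_PProd: "y \<in> elems (PProd s t) \<longleftrightarrow> (\<exists>y1 y2. y = VPair y1 y2 \<and> y1 \<in> elems s \<and> y2 \<in> elems t)"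
  by (cases y) (auto simp: elems_def)

lemma elems_PUnit [simp]: "x \<in> elems PUnit \<longleftrightarrow> x = VUnit"
  by (cases x) (auto simp: elems_def)

lemma elems_PSum: "y \<in> elems (PSum s t) \<longleftrightarrow> (\<exists>a. y = VInl a \<and> a \<in> elems s) \<or> (\<exists>b. y = VInr b \<and> b \<in> elems t)"
  by (cases y) (auto simp: elems_def)

lemma rename_bot_letter [simp]: "rename \<pi> bot_letter = bot_letter"
  and rename_down_letter [simp]: "rename \<pi> down_letter = down_letter"
  by (simp_all add: bot_letter_def down_letter_def)

lemma rename_vfst: "vfst (rename \<pi> y) = rename \<pi> (vfst y)"
  and rename_vsnd: "vsnd (rename \<pi> y) = rename \<pi> (vsnd y)"
  by (cases y; simp)+

lemma rename_eq_VUnit_iff [simp]: "rename \<pi> x = VUnit \<longleftrightarrow> x = VUnit"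
  by (cases x) auto

lemma rename_eq_VInl_VUnit_iff [simp]: "rename \<pi> x = VInl VUnit \<longleftrightarrow> x = VInl VUnit"
  by (cases x) auto

lemma rename_eq_VInr_VUnit_iff [simp]: "rename \<pi> x = VInr VUnit \<longleftrightarrow> x = VInr VUnit"
  by (cases x) auto

definition shift_realisable :: "pof \<Rightarrow> bool" where
  "shift_realisable s \<longleftrightarrow> (\<exists>f. comp_primes s s f \<and> (\<forall>w \<in> lists (elems s). f w = shift w))"

text \<open>Splitting letterwise into two coordinates, shifting each and joining back shifts the word,
  because the two \<open>\<bottom>\<close> entering at the front are joined to \<open>\<bottom>\<close>.\<close>

lemma shift_realisable_retract:
  assumes "shift_realisable X" and "shift_realisable Y"
    and g: "equivariant_fun S (PProd X Y) g" and h: "equivariant_fun (PProd X Y) S h"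
    and h_bot: "h (VPair bot_letter bot_letter) = bot_letter"
    and h_g: "\<forall>x \<in> elems S. h (g x) = x"
  shows "shift_realisable S"
proof -
  obtain f1 where f1: "comp_primes X X f1" "\<forall>w \<in> lists (elems X). f1 w = shift w"
    using assms(1) by (auto simp: shift_realisable_def)
  obtain f2 where f2: "comp_primes Y Y f2" "\<forall>w \<in> lists (elems Y). f2 w = shift w"
    using assms(2) by (auto simp: shift_realisable_def)
  have "map h (par_comp f1 f2 (map g w)) = shift w" if w: "w \<in> lists (elems S)" for w
  proof -
    have g_w: "\<forall>x \<in> set w. g x = VPair (vfst (g x)) (vsnd (g x)) \<and> vfst (g x) \<in> elems X \<and> vsnd (g x) \<in> elems Y"
      using w g by (fastforce simp: equivariant_fun_def elems_PProd)
    define u v where "u = map (vfst \<circ> g) w" and "v = map (vsnd \<circ> g) w"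
    have "map2 VPair u v = map (\<lambda>x. VPair (vfst (g x)) (vsnd (g x))) w"
      unfolding u_def v_def by (induction w) auto
    also have "\<dots> = map g w"
      using g_w by (metis (no_types, lifting) map_eq_conv)
    finally have uv: "map2 VPair u v = map g w" .
    have "u \<in> lists (elems X)" and "v \<in> lists (elems Y)"
      using g_w by (auto simp: u_def v_def)
    then have "map h (par_comp f1 f2 (map g w)) = map h (map2 VPair (shift u) (shift v))"
      using f1(2) f2(2) by (simp add: par_comp_def u_def v_def)
    also have "\<dots> = shift (map h (map2 VPair u v))"
      by (rule map_shift_pairs) (simp_all add: h_bot u_def v_def)
    also have "\<dots> = shift (map h (map g w))"
      by (simp only: uv)
    also have "map h (map g w) = w"
      using w h_g by (induction w) auto
    finally show ?thesis .
  qed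
  moreover have "comp_primes S S (map h \<circ> (par_comp f1 f2 \<circ> map g))"
    by (rule comp_primes.seq[OF comp_primes.seq[OF comp_primes.letterwise[OF g]
          comp_primes.par[OF f1(1) f2(1)]] comp_primes.letterwise[OF h]])
  ultimately show ?thesis
    unfolding shift_realisable_def by (metis comp_apply)
qed

fun pair_split :: "val \<Rightarrow> val" where
  "pair_split (VInl (VPair a b)) = VPair (VInl a) (VInl b)"
| "pair_split _ = VPair bot_letter bot_letter"

fun pair_join :: "val \<Rightarrow> val" where
  "pair_join (VPair (VInl a) (VInl b)) = VInl (VPair a b)"
| "pair_join _ = bot_letter"

fun sum_split :: "val \<Rightarrow> val" where
  "sum_split (VInl (VInl a)) = VPair (VInl a) bot_letter"
| "sum_split (VInl (VInr b)) = VPair bot_letter (VInl b)"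
| "sum_split _ = VPair bot_letter bot_letter"

fun sum_join :: "val \<Rightarrow> val" where
  "sum_join (VPair (VInl a) _) = VInl (VInl a)"
| "sum_join (VPair _ (VInl b)) = VInl (VInr b)"
| "sum_join _ = bot_letter"

lemma pair_split_rename: "pair_split (rename \<pi> x) = rename \<pi> (pair_split x)"
  by (cases x rule: pair_split.cases) (simp_all add: bot_letter_def)

lemma pair_join_rename: "pair_join (rename \<pi> x) = rename \<pi> (pair_join x)"
  by (cases x rule: pair_join.cases) (simp_all add: bot_letter_def)

lemma sum_split_rename: "sum_split (rename \<pi> x) = rename \<pi> (sum_split x)"
  by (cases x rule: sum_split.cases) (simp_all add: bot_letter_def)

lemma sum_join_rename: "sum_join (rename \<pi> x) = rename \<pi> (sum_join x)"
  by (cases x rule: sum_join.cases) (simp_all add: bot_letter_def)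

lemma shift_realisable_PProd:
  assumes "shift_realisable (with_bot s)" and "shift_realisable (with_bot t)"
  shows "shift_realisable (with_bot (PProd s t))"
proof (rule shift_realisable_retract[OF assms, of _ pair_split pair_join])
  show "equivariant_fun (with_bot (PProd s t)) (PProd (with_bot s) (with_bot t)) pair_split"
    by (auto simp: equivariant_fun_def pair_split_rename elems_with_bot elems_PProd bot_letter_def)
  show "equivariant_fun (PProd (with_bot s) (with_bot t)) (with_bot (PProd s t)) pair_join"
    by (auto simp: equivariant_fun_def pair_join_rename elems_with_bot elems_PProd bot_letter_def)
  show "\<forall>x \<in> elems (with_bot (PProd s t)). pair_join (pair_split x) = x"
    by (auto simp: elems_with_bot elems_PProd bot_letter_def)
qed (simp add: bot_letter_def)

lemma shift_realisable_PSum: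
  assumes "shift_realisable (with_bot s)" and "shift_realisable (with_bot t)"
  shows "shift_realisable (with_bot (PSum s t))"
proof (rule shift_realisable_retract[OF assms, of _ sum_split sum_join])
  show "equivariant_fun (with_bot (PSum s t)) (PProd (with_bot s) (with_bot t)) sum_split"
    by (auto simp: equivariant_fun_def sum_split_rename elems_with_bot elems_PProd elems_PSum bot_letter_def)
  show "equivariant_fun (PProd (with_bot s) (with_bot t)) (with_bot (PSum s t)) sum_join"
    by (auto simp: equivariant_fun_def sum_join_rename elems_with_bot elems_PProd elems_PSum bot_letter_def)
  show "\<forall>x \<in> elems (with_bot (PSum s t)). sum_join (sum_split x) = x"
    by (auto simp: elems_with_bot elems_PSum bot_letter_def)
qed (simp add: bot_letter_def)

lemma length_mealy_run [simp]: "length (mealy_run \<delta> q w) = length w"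
  by (induction w arbitrary: q) auto

definition unit_letter :: "nat \<Rightarrow> val" where
  "unit_letter q = (if q = 1 then VInl VUnit else bot_letter)"

definition unit_delay_step :: "nat \<Rightarrow> val \<Rightarrow> nat \<times> val" where
  "unit_delay_step q a = (if a = VInl VUnit then 1 else 0, unit_letter q)"

lemma mealy_run_unit_delay_step:
  "w \<in> lists (elems (with_bot PUnit)) \<Longrightarrow>
     mealy_run unit_delay_step q w = take (length w) (unit_letter q # w)"
proof (induction w arbitrary: q)
  case (Cons a w)
  then have "unit_letter (if a = VInl VUnit then 1 else 0) = a"
    by (auto simp: elems_with_bot unit_letter_def)
  with Cons show ?case
    by (cases w) (auto simp: unit_delay_step_def)
qed simp

lemma shift_realisable_PUnit: "shift_realisable (with_bot PUnit)"
  unfolding shift_realisable_def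
proof (intro exI conjI ballI)
  show "comp_primes (with_bot PUnit) (with_bot PUnit) (mealy_run unit_delay_step 0)"
    by (rule comp_primes.mealy[where Q = "{0, 1}"])
      (auto simp: unit_delay_step_def unit_letter_def elems_with_bot)
  show "mealy_run unit_delay_step 0 w = shift w" if "w \<in> lists (elems (with_bot PUnit))" for w
    using that by (simp add: mealy_run_unit_delay_step shift_eq_take unit_letter_def)
qed

lemma length_atom_prop [simp]: "length (atom_prop u) = length u"
  by (simp add: atom_prop_def)

lemma nth_atom_prop_down:
  assumes i: "i < length u" and down: "u ! i = down_letter"
    and not_eps: "0 < i \<Longrightarrow> u ! (i - 1) \<noteq> eps_letter"
  shows "atom_prop u ! i = (if 0 < i \<and> (\<exists>a. u ! (i - 1) = VInl (VAtom a)) then u ! (i - 1) else bot_letter)"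
proof -
  have source_iff: "(\<exists>j<i. u ! j = VInl (VAtom a) \<and> (\<forall>k. j < k \<and> k < i \<longrightarrow> u ! k = eps_letter))
      \<longleftrightarrow> 0 < i \<and> u ! (i - 1) = VInl (VAtom a)" for a
  proof
    assume "\<exists>j<i. u ! j = VInl (VAtom a) \<and> (\<forall>k. j < k \<and> k < i \<longrightarrow> u ! k = eps_letter)"
    then obtain j where j: "j < i" "u ! j = VInl (VAtom a)" "\<forall>k. j < k \<and> k < i \<longrightarrow> u ! k = eps_letter"
      by blast
    have "j = i - 1"
    proof (rule ccontr)
      assume "j \<noteq> i - 1"
      then have "u ! (i - 1) = eps_letter" using j by auto
      then show False using not_eps j by auto
    qed
    then show "0 < i \<and> u ! (i - 1) = VInl (VAtom a)" using j by auto
  next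
    assume "0 < i \<and> u ! (i - 1) = VInl (VAtom a)"
    then show "\<exists>j<i. u ! j = VInl (VAtom a) \<and> (\<forall>k. j < k \<and> k < i \<longrightarrow> u ! k = eps_letter)"
      by (intro exI[of _ "i - 1"]) auto
  qed
  then have "(\<exists>j<i. \<exists>a. u ! j = VInl (VAtom a) \<and> (\<forall>k. j < k \<and> k < i \<longrightarrow> u ! k = eps_letter))
      \<longleftrightarrow> 0 < i \<and> (\<exists>a. u ! (i - 1) = VInl (VAtom a))"
    by blast
  then show ?thesis
    using i down by (auto simp: atom_prop_def source_iff)
qed

definition parity_letter :: "bool \<Rightarrow> val" where
  "parity_letter b = (if b then VInl VUnit else VInr VUnit)"

lemma parity_letter_eq_iff [simp]: "parity_letter b = parity_letter c \<longleftrightarrow> b = c"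
  by (simp add: parity_letter_def)

lemma parity_letter_in [simp]: "parity_letter b \<in> elems (PSum PUnit PUnit)"
  by (simp add: parity_letter_def elems_PSum)

lemma rename_eq_parity_letter_iff [simp]: "rename \<pi> p = parity_letter b \<longleftrightarrow> p = parity_letter b"
  by (simp add: parity_letter_def)

definition parity_step :: "nat \<Rightarrow> val \<Rightarrow> nat \<times> val" where
  "parity_step q a = (1 - q, parity_letter (q = 0))"

lemma nth_mealy_run_parity_step:
  "q \<le> 1 \<Longrightarrow> i < length w \<Longrightarrow> mealy_run parity_step q w ! i = parity_letter (even (q + i))"
proof (induction w arbitrary: q i)
  case (Cons a w)
  then show ?case
    by (cases i) (auto simp: parity_step_def le_Suc_eq)
qed simp

text \<open>Mealy machines have atom-free alphabets, so the parity counter reads the word with every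
  letter replaced by \<open>VUnit\<close>.\<close>

definition parity_tag :: "val list \<Rightarrow> val list" where
  "parity_tag = par_comp (map id) (mealy_run parity_step 0 \<circ> map (\<lambda>_. VUnit)) \<circ> map (\<lambda>x. VPair x x)"

lemma parity_tag_eq: "parity_tag w = map (\<lambda>i. VPair (w ! i) (parity_letter (even i))) [0..<length w]"
  by (rule nth_equalityI)
    (simp_all add: parity_tag_def par_comp_def nth_mealy_run_parity_step del: mealy_run.simps)

lemma comp_primes_parity_tag: "comp_primes s (PProd s (PSum PUnit PUnit)) parity_tag"
proof -
  have "equivariant_fun s (PProd s s) (\<lambda>x. VPair x x)"
    by (simp add: equivariant_fun_def elems_PProd)
  moreover have "equivariant_fun s s id"
    by (simp add: equivariant_fun_def)
  moreover have "equivariant_fun s PUnit (\<lambda>_. VUnit)"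
    by (simp add: equivariant_fun_def)
  moreover have "comp_primes PUnit (PSum PUnit PUnit) (mealy_run parity_step 0)"
    by (rule comp_primes.mealy[where Q = "{0, 1}"]) (auto simp: parity_step_def)
  ultimately show ?thesis
    unfolding parity_tag_def
    by (metis comp_primes.letterwise comp_primes.par comp_primes.seq)
qed

fun atom_source :: "val \<Rightarrow> val" where
  "atom_source (VInl (VAtom a)) = VInl (VAtom a)"
| "atom_source _ = down_letter"

lemma atom_source_rename: "atom_source (rename \<pi> x) = rename \<pi> (atom_source x)"
  by (cases x rule: atom_source.cases) (simp_all add: down_letter_def)

lemma atom_source_in [simp]: "atom_source x \<in> elems prop_in"
  by (cases x rule: atom_source.cases) (simp_all add: down_letter_def elems_def prop_in_def)

lemma atom_source_ne_eps [simp]: "atom_source x \<noteq> eps_letter"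
  by (cases x rule: atom_source.cases) (simp_all add: down_letter_def eps_letter_def)

lemma atom_source_recover:
  "x \<in> elems (with_bot PAtoms) \<Longrightarrow>
     (if \<exists>a. atom_source x = VInl (VAtom a) then atom_source x else bot_letter) = x"
  by (cases x rule: atom_source.cases)
    (auto simp: elems_with_bot elems_def down_letter_def bot_letter_def elim: in_pof.elims)

definition track :: "bool \<Rightarrow> val \<Rightarrow> val \<Rightarrow> val" where
  "track b x p = (if p = parity_letter b then atom_source x else down_letter)"

lemma track_in [simp]: "track b x p \<in> elems prop_in"
  using atom_source_in by (simp add: track_def down_letter_def elems_def prop_in_def)

lemma track_rename: "track b (rename \<pi> x) (rename \<pi> p) = rename \<pi> (track b x p)"
  by (simp add: track_def atom_source_rename)

lemma nth_atom_prop_track: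
  assumes w: "w \<in> lists (elems (with_bot PAtoms))" and i: "i < length w" and parity: "even i \<noteq> b"
  shows "atom_prop (map (\<lambda>j. track b (w ! j) (parity_letter (even j))) [0..<length w]) ! i = shift w ! i"
proof -
  let ?u = "map (\<lambda>j. track b (w ! j) (parity_letter (even j))) [0..<length w]"
  have "?u ! i = down_letter" and "0 < i \<Longrightarrow> ?u ! (i - 1) \<noteq> eps_letter"
    using i parity atom_source_ne_eps by (auto simp: track_def down_letter_def eps_letter_def)
  then have "atom_prop ?u ! i
      = (if 0 < i \<and> (\<exists>a. ?u ! (i - 1) = VInl (VAtom a)) then ?u ! (i - 1) else bot_letter)"
    using i by (intro nth_atom_prop_down) auto
  also have "\<dots> = shift w ! i"
  proof (cases i)
    case 0
    then show ?thesis using i by (simp add: nth_shift)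
  next
    case (Suc k)
    then have "?u ! (i - 1) = atom_source (w ! k)" and "w ! k \<in> elems (with_bot PAtoms)"
      using i parity w by (auto simp: track_def)
    with atom_source_recover[of "w ! k"] Suc i show ?thesis
      by (auto simp: nth_shift split: if_splits)
  qed
  finally show ?thesis .
qed

definition split_tracks :: "val \<Rightarrow> val" where
  "split_tracks y =
     VPair (VPair (track True (vfst y) (vsnd y)) (track False (vfst y) (vsnd y))) (vsnd y)"

definition select_track :: "val \<Rightarrow> val" where
  "select_track y = (if vsnd y = parity_letter True then vsnd (vfst y) else vfst (vfst y))"

definition atom_shift :: "val list \<Rightarrow> val list" where
  "atom_shift = map select_track \<circ>
     (par_comp (par_comp atom_prop atom_prop) (map id) \<circ> (map split_tracks \<circ> parity_tag))"

lemma comp_primes_atom_shift: "comp_primes (with_bot PAtoms) (with_bot PAtoms) atom_shift"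
proof -
  have "equivariant_fun (PProd (with_bot PAtoms) (PSum PUnit PUnit))
      (PProd (PProd prop_in prop_in) (PSum PUnit PUnit)) split_tracks"
    by (auto simp: equivariant_fun_def elems_PProd split_tracks_def track_rename rename_vfst rename_vsnd)
  moreover have "equivariant_fun (PProd (PProd prop_out prop_out) (PSum PUnit PUnit)) prop_out select_track"
    by (auto simp: equivariant_fun_def elems_PProd select_track_def rename_vfst rename_vsnd)
  moreover have "equivariant_fun (PSum PUnit PUnit) (PSum PUnit PUnit) id"
    by (simp add: equivariant_fun_def)
  ultimately have "comp_primes (with_bot PAtoms) prop_out atom_shift"
    unfolding atom_shift_def
    by (meson comp_primes.letterwise comp_primes.par comp_primes.seq comp_primes.atomprop
        comp_primes_parity_tag)
  then show ?thesis
    by (simp add: prop_out_def)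
qed

lemma atom_shift_eq_shift:
  assumes w: "w \<in> lists (elems (with_bot PAtoms))"
  shows "atom_shift w = shift w"
proof (rule nth_equalityI)
  let ?tr = "\<lambda>b. map (\<lambda>j. track b (w ! j) (parity_letter (even j))) [0..<length w]"
  have atom_shift_unfold: "atom_shift w = map (\<lambda>i. select_track (VPair (VPair
      (atom_prop (?tr True) ! i) (atom_prop (?tr False) ! i)) (parity_letter (even i)))) [0..<length w]"
    by (rule nth_equalityI)
      (simp_all add: atom_shift_def parity_tag_eq split_tracks_def par_comp_def o_def)
  show "length (atom_shift w) = length (shift w)"
    by (simp add: atom_shift_unfold)
  fix i assume "i < length (atom_shift w)"
  then have i: "i < length w"
    by (simp add: atom_shift_unfold)
  show "atom_shift w ! i = shift w ! i"
    using nth_atom_prop_track[OF w i] i by (simp add: atom_shift_unfold select_track_def)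
qed

lemma shift_realisable_PAtoms: "shift_realisable (with_bot PAtoms)"
  using comp_primes_atom_shift atom_shift_eq_shift unfolding shift_realisable_def by blast

lemma shift_realisable: "shift_realisable (with_bot s)"
  by (induction s)
    (simp_all add: shift_realisable_PAtoms shift_realisable_PUnit shift_realisable_PProd
      shift_realisable_PSum)

theorem mainTheorem13:
  fixes \<Sigma> :: pof
  shows "\<exists>f. comp_primes \<Sigma> (PSum \<Sigma> PUnit) f \<and>
             (\<forall>w \<in> lists (elems \<Sigma>). f w = delay w)"
proof -
  obtain f where f: "comp_primes (with_bot \<Sigma>) (with_bot \<Sigma>) f"
    and f_shift: "\<forall>w \<in> lists (elems (with_bot \<Sigma>)). f w = shift w"
    using shift_realisable unfolding shift_realisable_def by blast
  have "equivariant_fun \<Sigma> (with_bot \<Sigma>) VInl"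
    by (simp add: equivariant_fun_def elems_PSum)
  then have "comp_primes \<Sigma> (with_bot \<Sigma>) (f \<circ> map VInl)"
    using f by (rule comp_primes.seq[OF comp_primes.letterwise])
  moreover have "(f \<circ> map VInl) w = delay w" if "w \<in> lists (elems \<Sigma>)" for w
  proof -
    have "map VInl w \<in> lists (elems (with_bot \<Sigma>))"
      using that by (auto simp: elems_PSum)
    then show ?thesis
      using f_shift by (simp add: delay_eq_shift)
  qed
  ultimately show ?thesis
    by blast
qed

end
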